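(* Let $X=\mu^{-1}(0)/G$ be a toric Calabi-Yau manifold obtained as a symplectic quotient of $\mathbb{C}^m$ by a subtorus $G\subset T^m$, with quotient map $\pi:\mu^{-1}(0)\to X$, and let $\epsilon\in\mathbb{C}^\times$. Let $\rho=(\rho_0,|\chi^u-\epsilon|):X\to B=\mathbb{R}^{n-1}\times\mathbb{R}_{\geq 0}$ be the Gross fibration and let $$\tilde\rho:\mathbb{C}^m\to\tilde B=\mathbb{R}^{m-1}\times\mathbb{R}_{\geq0},\quad (X_1,\dots,X_m)\mapsto\big(|X_1|^2-|X_m|^2,\dots,|X_{m-1}|^2-|X_m|^2,\ |X_1X_2\cdots X_m-\epsilon|\big)$$ be the Harvey-Lawson fibration. Then the Gross fibration $\rho$ is the fiberwise quotient of $\tilde\rho|_{\mu^{-1}(0)}$ by $G$: there is an embedding of affine manifolds $\iota:B\hookrightarrow\tilde B$ (induced by the map $\mathfrak{t}^*\to(\mathbb{R}^m)^*$, $\mathbf{x}\mapsto(\ell_1(\mathbf{x}),\dots,\ell_m(\mathbf{x}))$) such that $\tilde\rho|_{\mu^{-1}(0)}=\iota\circ\rho\circ\pi$, so that each fiber of $\rho$ is the quotient by $G$ of the corresponding fiber of $\tilde\rho|_{\mu^{-1}(0)}$.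
   Context: $T^m$ acts diagonally on $\mathbb{C}^m$ (standard symplectic form); $G\subset T^m$ is a subtorus of dimension $r=m-n$ with moment map $\mu$, acting freely on $\mu^{-1}(0)$, and $X=\mu^{-1}(0)/G$ is a toric manifold of complex dimension $n$ with residual torus $T=T^m/G$ and moment map $\phi:X\to\mathfrak{t}^*$, whose image is $\Delta=\{\mathbf{x}:\ell_i(\mathbf{x})\ge0,\ i=1,\dots,m\}$, $\ell_i(\mathbf{x})=2\pi(\langle\mathbf{x},v_i\rangle-\lambda_i)$, with $v_i\in N=\mathbb{Z}^n$ the primitive inward normals (ray generators of the fan) and $\lambda_i\in\mathbb{R}$; one has $\ell_i(\phi([X_1,\dots,X_m]))=2\pi|X_i|^2$ on $\mu^{-1}(0)$. $X$ is Calabi-Yau (trivial canonical bundle) and semi-projective (support of the fan convex), so there is $u\in M=\mathrm{Hom}(N,\mathbb{Z})$ with $\langle u,v_i\rangle=1$ for all $i$; the character $\chi^u$ is a holomorphic function on $X$ vanishing to first order exactly along the toric prime divisors, and it lifts to the monomial $X_1\cdots X_m$ on $\mathbb{C}^m$. $T_0\subset T$ is the subtorus preserving $\chi^u$ (equivalently the holomorphic volume form), and $\rho_0:X\to\mathfrak{t}_0^*\cong\mathbb{R}^{n-1}$ is its moment map, i.e. $\phi$ composed with the projection along the ray spanned by $u$. The Gross fibration is $\rho=(\rho_0,|\chi^u-\epsilon|)$, a special Lagrangian torus fibration. *)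

theory Defs
  imports "HOL-Analysis.Analysis"
begin

text \<open>Data: m rays v 0, ..., v (m-1) in N = Z^n (N_R = real^'n, and t^* = M_R
 identified with real^'n via the dot product), constants lam i.
 C^m is modelled as functions nat => complex supported on {..<m};
 the coordinate X_m of the paper is X (m-1).\<close>

definition is_lattice_vec :: "real^'n \<Rightarrow> bool" where
  "is_lattice_vec w \<longleftrightarrow> (\<forall>j. w $ j \<in> \<int>)"

definition primitive_vec :: "real^'n \<Rightarrow> bool" where
  "primitive_vec w \<longleftrightarrow> is_lattice_vec w \<and> w \<noteq> 0 \<and>
     \<not> (\<exists>k::int. k > 1 \<and> (\<exists>w'. is_lattice_vec w' \<and> w = of_int k *\<^sub>R w'))"

definition Cm :: "nat \<Rightarrow> (nat \<Rightarrow> complex) set" where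
  "Cm m = {X. \<forall>i\<ge>m. X i = 0}"

definition ell :: "(nat \<Rightarrow> real^'n) \<Rightarrow> (nat \<Rightarrow> real) \<Rightarrow> nat \<Rightarrow> real^'n \<Rightarrow> real" where
  "ell v lam i x = 2 * pi * (x \<bullet> v i - lam i)"

definition gLie :: "nat \<Rightarrow> (nat \<Rightarrow> real^'n) \<Rightarrow> (nat \<Rightarrow> real) set" where
  "gLie m v = {\<xi>. (\<forall>i\<ge>m. \<xi> i = 0) \<and> (\<Sum>i<m. \<xi> i *\<^sub>R v i) = 0}"

definition Gsub :: "nat \<Rightarrow> (nat \<Rightarrow> real^'n) \<Rightarrow> (nat \<Rightarrow> complex) set" where
  "Gsub m v = {t. \<exists>\<xi>\<in>gLie m v. t = (\<lambda>i. cis (2 * pi * \<xi> i))}"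

definition tact :: "(nat \<Rightarrow> complex) \<Rightarrow> (nat \<Rightarrow> complex) \<Rightarrow> (nat \<Rightarrow> complex)" where
  "tact t X = (\<lambda>i. t i * X i)"

text \<open>Moment map of G (restriction to g of the shifted T^m moment map),
 as a functional on g.\<close>
definition momG :: "nat \<Rightarrow> (nat \<Rightarrow> real) \<Rightarrow> (nat \<Rightarrow> complex) \<Rightarrow> (nat \<Rightarrow> real) \<Rightarrow> real" where
  "momG m lam X \<xi> = (\<Sum>i<m. \<xi> i * (pi * (cmod (X i))\<^sup>2 + pi * lam i))"

definition level0 :: "nat \<Rightarrow> (nat \<Rightarrow> real^'n) \<Rightarrow> (nat \<Rightarrow> real) \<Rightarrow> (nat \<Rightarrow> complex) set" where
  "level0 m v lam = {X \<in> Cm m. \<forall>\<xi>\<in>gLie m v. momG m lam X \<xi> = 0}"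

text \<open>Quotient map pi : mu^{-1}(0) -> X = mu^{-1}(0)/G (points of X are G-orbits).\<close>
definition quot :: "nat \<Rightarrow> (nat \<Rightarrow> real^'n) \<Rightarrow> (nat \<Rightarrow> complex) \<Rightarrow> (nat \<Rightarrow> complex) set" where
  "quot m v X = (\<lambda>t. tact t X) ` Gsub m v"

definition Xquot :: "nat \<Rightarrow> (nat \<Rightarrow> real^'n) \<Rightarrow> (nat \<Rightarrow> real) \<Rightarrow> (nat \<Rightarrow> complex) set set" where
  "Xquot m v lam = quot m v ` level0 m v lam"

text \<open>Moment map phi of the residual torus, induced from that of T^m.\<close>
definition phi :: "nat \<Rightarrow> (nat \<Rightarrow> real^'n) \<Rightarrow> (nat \<Rightarrow> real) \<Rightarrow> (nat \<Rightarrow> complex) set \<Rightarrow> real^'n" where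
  "phi m v lam Orb = (THE x. \<exists>X\<in>Orb. \<forall>i<m. ell v lam i x = 2 * pi * (cmod (X i))\<^sup>2)"

definition chi_u :: "nat \<Rightarrow> (nat \<Rightarrow> complex) set \<Rightarrow> complex" where
  "chi_u m Orb = (THE z. \<exists>X\<in>Orb. z = (\<Prod>i<m. X i))"

text \<open>Gross fibration rho = (rho_0, |chi^u - eps|), rho_0 = P o phi with
 P : t^* -> t_0^* the projection along the ray spanned by u.\<close>
definition gross :: "nat \<Rightarrow> (nat \<Rightarrow> real^'n) \<Rightarrow> (nat \<Rightarrow> real) \<Rightarrow> (real^'n \<Rightarrow> 'b) \<Rightarrow> complex
    \<Rightarrow> (nat \<Rightarrow> complex) set \<Rightarrow> 'b \<times> real" where
  "gross m v lam P \<epsilon> Orb = (P (phi m v lam Orb), cmod (chi_u m Orb - \<epsilon>))"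

definition harvey_lawson :: "nat \<Rightarrow> complex \<Rightarrow> (nat \<Rightarrow> complex) \<Rightarrow> (nat \<Rightarrow> real) \<times> real" where
  "harvey_lawson m \<epsilon> X =
     ((\<lambda>i. if i < m - 1 then (cmod (X i))\<^sup>2 - (cmod (X (m - 1)))\<^sup>2 else 0),
      cmod ((\<Prod>i<m. X i) - \<epsilon>))"

end

theory Submission
  imports Defs
begin

text \<open>On the level set the moment coordinates of \<open>\<phi>\<close> are read off the lift:
  \<open>\<ell>\<^sub>i(\<phi>(\<pi> X)) = 2\<pi>|X\<^sub>i|\<^sup>2\<close>, because a vector of \<open>\<real>\<^sup>m\<close> killed by the Lie algebra of
  \<open>G\<close> (the relations among the rays) is a vector of pairings with some point of \<open>\<t>\<^sup>*\<close>.
  The monomial \<open>X\<^sub>1\<cdots>X\<^sub>m\<close> is \<open>G\<close>-invariant, since \<open>\<Sum>\<xi>\<^sub>i = \<langle>u, \<Sum>\<xi>\<^sub>i v\<^sub>i\<rangle> = 0\<close> on the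
  Lie algebra, so it descends to \<open>\<chi>\<^sup>u\<close>. Finally, the differences \<open>\<ell>\<^sub>i - \<ell>\<^sub>m\<close> vanish
  exactly along the ray spanned by \<open>u\<close>, which is the kernel of the projection
  defining \<open>\<rho>\<^sub>0\<close>; so they define an injective affine map on the base through which
  the Harvey-Lawson fibration factors.\<close>

lemma sum_scaleR_representation:
  fixes v :: "nat \<Rightarrow> 'a::real_vector"
  assumes "span (v ` {..<m}) = UNIV" and "inj_on v {..<m}"
  obtains \<xi> where "\<forall>i\<ge>m. \<xi> i = 0" and "(\<Sum>i<m. \<xi> i *\<^sub>R v i) = y"
proof -
  have "y \<in> span (v ` {..<m})" using assms(1) by simp
  then obtain c where c: "(\<Sum>w\<in>v ` {..<m}. c w *\<^sub>R w) = y"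
    using span_finite[of "v ` {..<m}"] by auto
  have "(\<Sum>w\<in>v ` {..<m}. c w *\<^sub>R w) = (\<Sum>i<m. (if i < m then c (v i) else 0) *\<^sub>R v i)"
    using sum.reindex[OF assms(2), of "\<lambda>w. c w *\<^sub>R w"] by simp
  with c show ?thesis
    by (intro that[of "\<lambda>i. if i < m then c (v i) else 0"]) auto
qed

lemma inner_eq_of_relations:
  fixes v :: "nat \<Rightarrow> 'a::euclidean_space"
  assumes spanning: "span (v ` {..<m}) = UNIV" and inj: "inj_on v {..<m}"
    and relations: "\<And>\<xi>. \<forall>i\<ge>m. \<xi> i = 0 \<Longrightarrow> (\<Sum>i<m. \<xi> i *\<^sub>R v i) = 0 \<Longrightarrow> (\<Sum>i<m. \<xi> i * a i) = 0"
  obtains x where "\<forall>i<m. x \<bullet> v i = a i"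
proof -
  define coeffs where "coeffs y = (SOME \<xi>. (\<forall>i\<ge>m. \<xi> i = 0) \<and> (\<Sum>i<m. \<xi> i *\<^sub>R v i) = y)" for y
  have coeffs: "(\<forall>i\<ge>m. coeffs y i = 0) \<and> (\<Sum>i<m. coeffs y i *\<^sub>R v i) = y" for y
  proof -
    have "\<exists>\<xi>. (\<forall>i\<ge>m. \<xi> i = 0) \<and> (\<Sum>i<m. \<xi> i *\<^sub>R v i) = y"
      by (rule sum_scaleR_representation[OF spanning inj, of y]) blast
    from someI_ex[OF this] show ?thesis unfolding coeffs_def .
  qed
  define g where "g y = (\<Sum>i<m. coeffs y i * a i)" for y
  \<comment> \<open>independent of the chosen coefficients, because \<open>a\<close> kills all relations\<close>
  have g: "g y = (\<Sum>i<m. \<xi> i * a i)"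
    if "\<forall>i\<ge>m. \<xi> i = 0" and "(\<Sum>i<m. \<xi> i *\<^sub>R v i) = y" for \<xi> y
  proof -
    have "(\<Sum>i<m. (coeffs y i - \<xi> i) * a i) = 0"
      by (rule relations) (use coeffs that in \<open>auto simp: scaleR_diff_left sum_subtractf\<close>)
    thus ?thesis by (simp add: g_def left_diff_distrib sum_subtractf)
  qed
  have "linear g"
  proof (rule linearI)
    fix y z
    have "g (y + z) = (\<Sum>i<m. (coeffs y i + coeffs z i) * a i)"
      by (rule g) (use coeffs in \<open>auto simp: scaleR_add_left sum.distrib\<close>)
    thus "g (y + z) = g y + g z" by (simp add: g_def distrib_right sum.distrib)
  next
    fix c :: real and y
    have "g (c *\<^sub>R y) = (\<Sum>i<m. (c * coeffs y i) * a i)"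
      by (rule g) (use coeffs in \<open>auto simp flip: scaleR_scaleR scaleR_sum_right\<close>)
    thus "g (c *\<^sub>R y) = c *\<^sub>R g y" by (simp add: g_def sum_distrib_left mult.assoc)
  qed
  then have g_inner: "g y = adjoint g 1 \<bullet> y" for y
    by (simp add: adjoint_clauses)
  have "adjoint g 1 \<bullet> v k = a k" if "k < m" for k
  proof -
    have "g (v k) = (\<Sum>i<m. (if i = k then 1 else 0) * a i)"
      by (rule g) (use that in \<open>auto simp: if_distrib[of "\<lambda>c. c *\<^sub>R _"] cong: if_cong\<close>)
    with that g_inner show ?thesis by (simp add: if_distrib[of "\<lambda>c. c * _"] cong: if_cong)
  qed
  with that show ?thesis by blast
qed

lemma inner_eq_zero_of_spanning:
  fixes w :: "'a::real_inner"
  assumes "span S = UNIV" and "\<forall>s\<in>S. w \<bullet> s = 0"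
  shows "w = 0"
proof -
  have "orthogonal w w"
    by (rule orthogonal_to_span[of w S]) (use assms in \<open>auto simp: orthogonal_def\<close>)
  thus ?thesis by (simp add: orthogonal_def)
qed

lemma self_mem_quot: "X \<in> quot m v X"
proof -
  have "(\<lambda>i. 0) \<in> gLie m v" by (simp add: gLie_def)
  hence "(\<lambda>i. cis (2 * pi * 0)) \<in> Gsub m v" unfolding Gsub_def by force
  moreover have "X = tact (\<lambda>i. cis (2 * pi * 0)) X" by (simp add: tact_def)
  ultimately show ?thesis unfolding quot_def by blast
qed

lemma norm_mem_quot: "Y \<in> quot m v X \<Longrightarrow> cmod (Y i) = cmod (X i)"
  by (auto simp: quot_def Gsub_def tact_def norm_mult)

lemma prod_cis: "finite A \<Longrightarrow> (\<Prod>i\<in>A. cis (f i)) = cis (\<Sum>i\<in>A. f i)"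
  by (induct rule: finite_induct) (auto simp: cis_mult)

lemma sum_gLie_eq_zero:
  assumes CY: "\<forall>i<m. u \<bullet> v i = 1" and "\<xi> \<in> gLie m v"
  shows "(\<Sum>i<m. \<xi> i) = 0"
proof -
  have "(\<Sum>i<m. \<xi> i) = (\<Sum>i<m. \<xi> i * (u \<bullet> v i))" using CY by simp
  also have "\<dots> = u \<bullet> (\<Sum>i<m. \<xi> i *\<^sub>R v i)" by (simp add: inner_sum_right)
  also have "\<dots> = 0" using assms(2) by (simp add: gLie_def)
  finally show ?thesis .
qed

lemma prod_mem_quot:
  assumes CY: "\<forall>i<m. u \<bullet> v i = 1" and "Y \<in> quot m v X"
  shows "(\<Prod>i<m. Y i) = (\<Prod>i<m. X i)"
proof -
  obtain \<xi> where \<xi>: "\<xi> \<in> gLie m v" and Y: "Y = tact (\<lambda>i. cis (2 * pi * \<xi> i)) X"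
    using assms(2) by (auto simp: quot_def Gsub_def)
  have "(\<Prod>i<m. Y i) = cis (2 * pi * (\<Sum>i<m. \<xi> i)) * (\<Prod>i<m. X i)"
    by (simp add: Y tact_def prod.distrib prod_cis sum_distrib_left)
  with sum_gLie_eq_zero[OF CY \<xi>] show ?thesis by simp
qed

lemma chi_u_quot:
  assumes "\<forall>i<m. u \<bullet> v i = 1"
  shows "chi_u m (quot m v X) = (\<Prod>i<m. X i)"
  unfolding chi_u_def
  by (rule the_equality) (use self_mem_quot prod_mem_quot[OF assms] in auto)

lemma ell_phi_quot:
  assumes spanning: "span (v ` {..<m}) = UNIV" and inj: "inj_on v {..<m}"
    and X: "X \<in> level0 m v lam"
  shows "\<forall>i<m. ell v lam i (phi m v lam (quot m v X)) = 2 * pi * (cmod (X i))\<^sup>2"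
proof -
  let ?a = "\<lambda>i. (cmod (X i))\<^sup>2 + lam i"
  have ell_iff: "ell v lam i y = 2 * pi * (cmod (Y i))\<^sup>2 \<longleftrightarrow> y \<bullet> v i = ?a i"
    if "Y \<in> quot m v X" for i y Y
    using norm_mem_quot[OF that] by (auto simp: ell_def)
  have relations: "(\<Sum>i<m. \<xi> i * ?a i) = 0" if "\<forall>i\<ge>m. \<xi> i = 0" "(\<Sum>i<m. \<xi> i *\<^sub>R v i) = 0" for \<xi>
  proof -
    have "momG m lam X \<xi> = 0" using X that by (simp add: level0_def gLie_def)
    hence "pi * (\<Sum>i<m. \<xi> i * ?a i) = 0"
      by (simp add: momG_def sum_distrib_left algebra_simps)
    thus ?thesis by simp
  qed
  then obtain x where x: "\<forall>i<m. x \<bullet> v i = ?a i"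
    using inner_eq_of_relations[OF spanning inj relations] by blast
  have "phi m v lam (quot m v X) = x"
    unfolding phi_def
  proof (rule the_equality)
    show "\<exists>Y\<in>quot m v X. \<forall>i<m. ell v lam i x = 2 * pi * (cmod (Y i))\<^sup>2"
      using self_mem_quot x ell_iff by blast
  next
    fix y assume "\<exists>Y\<in>quot m v X. \<forall>i<m. ell v lam i y = 2 * pi * (cmod (Y i))\<^sup>2"
    hence "\<forall>i<m. (y - x) \<bullet> v i = 0" using x ell_iff by (auto simp: inner_diff_left)
    thus "y = x" using inner_eq_zero_of_spanning[OF spanning, of "y - x"] by auto
  qed
  thus ?thesis using x ell_iff[OF self_mem_quot] by simp
qed

definition ell_coords :: "nat \<Rightarrow> (nat \<Rightarrow> real^'n) \<Rightarrow> (nat \<Rightarrow> real) \<Rightarrow> real^'n \<Rightarrow> nat \<Rightarrow> real" where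
  "ell_coords m v lam x =
     (\<lambda>i. if i < m - 1 then (ell v lam i x - ell v lam (m - 1) x) / (2 * pi) else 0)"

lemma ell_coords_eq:
  "ell_coords m v lam x =
    (\<lambda>i. if i < m - 1 then x \<bullet> (v i - v (m - 1)) - (lam i - lam (m - 1)) else 0)"
proof -
  have "ell v lam i x - ell v lam (m - 1) x = 2 * pi * (x \<bullet> (v i - v (m - 1)) - (lam i - lam (m - 1)))" for i
    by (simp add: ell_def algebra_simps inner_diff_right)
  then show ?thesis by (simp add: ell_coords_def cong: if_cong)
qed

lemma truncated_fun_eq_iff:
  "(\<lambda>i. if i < k then f i else 0) = (\<lambda>i. if i < k then g i else 0) \<longleftrightarrow> (\<forall>i<k. f i = g i)"
  by (auto simp: fun_eq_iff)

lemma ell_coords_eq_iff: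
  "ell_coords m v lam x = ell_coords m v lam y \<longleftrightarrow> (\<forall>i<m - 1. (x - y) \<bullet> (v i - v (m - 1)) = 0)"
  unfolding ell_coords_eq truncated_fun_eq_iff by (simp add: inner_diff_left)

lemma mem_span_iff_inner_diff_eq_0:
  fixes v :: "nat \<Rightarrow> 'a::real_inner"
  assumes spanning: "span (v ` {..<m}) = UNIV" and CY: "\<forall>i<m. u \<bullet> v i = 1"
  shows "w \<in> span {u} \<longleftrightarrow> (\<forall>i<m - 1. w \<bullet> (v i - v (m - 1)) = 0)"
proof
  assume "w \<in> span {u}"
  then obtain c where w: "w = c *\<^sub>R u" by (auto simp: span_singleton)
  show "\<forall>i<m - 1. w \<bullet> (v i - v (m - 1)) = 0"
  proof (intro allI impI)
    fix i assume i: "i < m - 1"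
    have "i < m" using i by linarith
    moreover have "m - 1 < m" using i by linarith
    ultimately show "w \<bullet> (v i - v (m - 1)) = 0" using CY by (simp add: w inner_diff_right)
  qed
next
  assume const: "\<forall>i<m - 1. w \<bullet> (v i - v (m - 1)) = 0"
  define c where "c = w \<bullet> v (m - 1)"
  have "(w - c *\<^sub>R u) \<bullet> v i = 0" if "i < m" for i
  proof -
    from that consider "i < m - 1" | "i = m - 1" by linarith
    then have "w \<bullet> v i = c"
      by cases (use const in \<open>auto simp: c_def inner_diff_right\<close>)
    with CY that show ?thesis by (simp add: inner_diff_left)
  qed
  hence "w = c *\<^sub>R u" using inner_eq_zero_of_spanning[OF spanning] by force
  thus "w \<in> span {u}" by (auto simp: span_singleton)
qed

lemma projection_eq_iff_ell_coords_eq: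
  assumes "linear P" and "\<forall>x. P x = 0 \<longleftrightarrow> x \<in> span {u}"
    and "span (v ` {..<m}) = UNIV" and "\<forall>i<m. u \<bullet> v i = 1"
  shows "P x = P y \<longleftrightarrow> ell_coords m v lam x = ell_coords m v lam y"
proof -
  have "P x = P y \<longleftrightarrow> P (x - y) = 0" by (simp add: linear_diff[OF assms(1)])
  also have "\<dots> \<longleftrightarrow> x - y \<in> span {u}" using assms(2) by blast
  finally show ?thesis by (simp add: ell_coords_eq_iff mem_span_iff_inner_diff_eq_0[OF assms(3,4)])
qed

lemma inj_comp_inv_surj:
  assumes "surj P" and "\<And>x y. P x = P y \<longleftrightarrow> h x = h y"
  shows "inj (h \<circ> inv P)" and "(h \<circ> inv P) (P x) = h x"
proof -
  show "inj (h \<circ> inv P)"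
    by (rule injI) (metis assms comp_apply surj_f_inv_f)
  show "(h \<circ> inv P) (P x) = h x"
    by (metis assms comp_apply surj_f_inv_f)
qed

lemma image_fibre_eq_fibre_image:
  assumes "inj \<iota>" and "\<forall>X\<in>A. f X = \<iota> (g (q X))"
  shows "q ` {X \<in> A. f X = \<iota> b} = {Orb \<in> q ` A. g Orb = b}"
  using assms by (auto simp: inj_eq)

lemma harvey_lawson_level0:
  assumes "span (v ` {..<m}) = UNIV" and "inj_on v {..<m}" and "\<forall>i<m. u \<bullet> v i = 1"
    and "X \<in> level0 m v lam"
  shows "harvey_lawson m \<epsilon> X =
    (ell_coords m v lam (phi m v lam (quot m v X)), cmod (chi_u m (quot m v X) - \<epsilon>))"
  using ell_phi_quot[OF assms(1,2,4)]
  by (auto simp: harvey_lawson_def ell_coords_def chi_u_quot[OF assms(3)] right_diff_distrib[symmetric])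

theorem mainTheorem1:
  fixes m :: nat and v :: "nat \<Rightarrow> real^'n" and lam :: "nat \<Rightarrow> real"
    and u :: "real^'n" and \<epsilon> :: complex and P :: "real^'n \<Rightarrow> 'b::euclidean_space"
  assumes rays: "\<forall>i<m. primitive_vec (v i)"
    and distinct_rays: "inj_on v {..<m}"
    and spanning: "span (v ` {..<m}) = UNIV"
    and u_lattice: "is_lattice_vec u"
    and CY: "\<forall>i<m. u \<bullet> v i = 1"
    and free: "\<forall>X\<in>level0 m v lam. \<forall>t\<in>Gsub m v. tact t X = X \<longrightarrow> t = (\<lambda>i. 1)"
    and eps: "\<epsilon> \<noteq> 0"
    and P_lin: "linear P" and P_surj: "surj P"
    and P_ker: "\<forall>x. P x = 0 \<longleftrightarrow> x \<in> span {u}"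
  shows "\<exists>\<iota> :: 'b \<times> real \<Rightarrow> (nat \<Rightarrow> real) \<times> real.
     (\<forall>x r. \<iota> (P x, r) =
        ((\<lambda>i. if i < m - 1 then (ell v lam i x - ell v lam (m - 1) x) / (2 * pi) else 0), r))
     \<and> inj \<iota>
     \<and> (\<forall>X\<in>level0 m v lam. harvey_lawson m \<epsilon> X = \<iota> (gross m v lam P \<epsilon> (quot m v X)))
     \<and> (\<forall>b \<in> UNIV \<times> {0..}.
          quot m v ` {X \<in> level0 m v lam. harvey_lawson m \<epsilon> X = \<iota> b}
          = {Orb \<in> Xquot m v lam. gross m v lam P \<epsilon> Orb = b})"
proof -
  define \<iota> where "\<iota> = map_prod (ell_coords m v lam \<circ> inv P) (id :: real \<Rightarrow> real)"
  note P_eq_iff = projection_eq_iff_ell_coords_eq[OF P_lin P_ker spanning CY]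
  have \<iota>_P: "\<iota> (P x, r) = (ell_coords m v lam x, r)" for x r
    using inj_comp_inv_surj(2)[OF P_surj P_eq_iff] by (simp add: \<iota>_def)
  have inj: "inj \<iota>"
    unfolding \<iota>_def by (intro prod.inj_map inj_comp_inv_surj(1)[OF P_surj P_eq_iff] inj_on_id)
  have lift: "\<forall>X\<in>level0 m v lam. harvey_lawson m \<epsilon> X = \<iota> (gross m v lam P \<epsilon> (quot m v X))"
    by (simp add: harvey_lawson_level0[OF spanning distinct_rays CY] gross_def \<iota>_P)
  have fibres: "\<forall>b \<in> UNIV \<times> {0..}. quot m v ` {X \<in> level0 m v lam. harvey_lawson m \<epsilon> X = \<iota> b}
      = {Orb \<in> Xquot m v lam. gross m v lam P \<epsilon> Orb = b}"
    using image_fibre_eq_fibre_image[where q = "quot m v" and g = "gross m v lam P \<epsilon>", OF inj lift]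
    by (simp add: Xquot_def)
  show ?thesis
    using \<iota>_P inj lift fibres by (intro exI[of _ \<iota>]) (simp add: ell_coords_def)
qed

end
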